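(* Assume $\operatorname{non}(\mathcal N)=\mathfrak c$. Then $\mathcal{ANM}_{\mathfrak c}\setminus\mathcal{ND}_{\mathfrak c}$ is $2^{\mathfrak c}$-coneable in $\left(\mathbb R^{[0,1]}\right)^{\mathfrak c}$.
   Context: For a regular infinite cardinal $\kappa$, a $\kappa$-sequence $(x_\alpha)_{\alpha<\kappa}$ converges to $x$ if for every neighbourhood $U$ of $x$ there is $\alpha_0<\kappa$ with $x_\alpha\in U$ for all $\alpha_0<\alpha<\kappa$; $\left(\mathbb R^{[0,1]}\right)^{\kappa}$ is the real vector space of $\kappa$-sequences of functions $[0,1]\to\mathbb R$ with indexwise operations. $\lambda$ is Lebesgue measure, $\mathcal N$ the null subsets of $[0,1]$, $\operatorname{non}(\mathcal N)$ the least cardinality of a non-null subset of $[0,1]$, $\mathfrak c=2^{\aleph_0}$. $\mathcal{ANM}_{\kappa}$: $\kappa$-sequences of Lebesgue measurable $f_\alpha:[0,1]\to\mathbb R$ converging a.e. to a measurable $f$ but not converging in measure to $f$ (for some $\varepsilon>0$, $\lambda(\{|f_\alpha-f|\ge\varepsilon\})\not\to0$). $\mathcal{ND}_{\kappa}$: $\kappa$-sequences of Lebesgue measurable $f_\alpha:[0,1]\to\mathbb R$ dominated a.e. by a common integrable $g$, converging a.e. to an integrable $f$, with $\int|f_\alpha-f|\,d\lambda\not\to0$. $S$ is positively (resp. negatively) $\mu$-coneable if there is a linearly independent $B\subset S$ of cardinality $\mu$ all of whose finite combinations with all coefficients $>0$ (resp. $<0$) lie in $S$; $\mu$-coneable means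 both. *)

theory Defs
  imports "HOL-Analysis.Analysis"
begin

text \<open>The index type of a continuum-sequence: a well-ordered type whose order type is the
  initial ordinal of cardinality continuum (cardinality of the reals), i.e. the type has
  cardinality continuum and every proper initial segment has cardinality below continuum.\<close>
definition continuum_order :: "'i::wellorder itself \<Rightarrow> bool" where
  "continuum_order _ \<longleftrightarrow>
     ordIso2 (card_of (UNIV :: 'i set)) (card_of (UNIV :: real set)) \<and>
     (\<forall>i::'i. ordLess2 (card_of {j. j < i}) (card_of (UNIV :: real set)))"

definition nonN_eq_c :: bool where
  "nonN_eq_c \<longleftrightarrow>
     (\<forall>A. A \<subseteq> {0..1::real} \<and> ordLess2 (card_of A) (card_of (UNIV :: real set))
          \<longrightarrow> A \<in> null_sets lebesgue)"

definition kconv :: "('i::linorder \<Rightarrow> 'b::topological_space) \<Rightarrow> 'b \<Rightarrow> bool" where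
  "kconv x l \<longleftrightarrow> (\<forall>U. open U \<and> l \<in> U \<longrightarrow> (\<exists>\<alpha>0. \<forall>\<alpha>. \<alpha>0 < \<alpha> \<longrightarrow> x \<alpha> \<in> U))"

text \<open>Functions [0,1] -> R are represented as functions R -> R vanishing off [0,1].\<close>
definition on_unit :: "(real \<Rightarrow> real) \<Rightarrow> bool" where
  "on_unit h \<longleftrightarrow> (\<forall>x. x \<notin> {0..1} \<longrightarrow> h x = 0)"

abbreviation LU :: "real measure" where
  "LU \<equiv> lebesgue_on {0..1}"

definition ANM :: "('i::linorder \<Rightarrow> real \<Rightarrow> real) set" where
  "ANM = {F. (\<forall>\<alpha>. on_unit (F \<alpha>) \<and> F \<alpha> \<in> borel_measurable LU) \<and>
     (\<exists>f \<in> borel_measurable LU.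
        (AE x in LU. kconv (\<lambda>\<alpha>. F \<alpha> x) (f x)) \<and>
        (\<exists>\<epsilon>>0. \<not> kconv (\<lambda>\<alpha>. measure LU {x \<in> {0..1}. \<epsilon> \<le> \<bar>F \<alpha> x - f x\<bar>}) 0))}"

definition ND :: "('i::linorder \<Rightarrow> real \<Rightarrow> real) set" where
  "ND = {F. (\<forall>\<alpha>. on_unit (F \<alpha>) \<and> F \<alpha> \<in> borel_measurable LU) \<and>
     (\<exists>g. integrable LU g \<and> (\<forall>\<alpha>. AE x in LU. \<bar>F \<alpha> x\<bar> \<le> g x)) \<and>
     (\<exists>f. integrable LU f \<and>
        (AE x in LU. kconv (\<lambda>\<alpha>. F \<alpha> x) (f x)) \<and>
        \<not> kconv (\<lambda>\<alpha>. integral\<^sup>L LU (\<lambda>x. \<bar>F \<alpha> x - f x\<bar>)) 0)}"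

definition lin_indep :: "('i \<Rightarrow> real \<Rightarrow> real) set \<Rightarrow> bool" where
  "lin_indep B \<longleftrightarrow>
     (\<forall>A c. finite A \<and> A \<subseteq> B \<and> (\<forall>\<alpha> x. (\<Sum>b\<in>A. c b * b \<alpha> x) = 0) \<longrightarrow> (\<forall>b\<in>A. c b = 0))"

definition pos_coneable :: "'k set \<Rightarrow> ('i \<Rightarrow> real \<Rightarrow> real) set \<Rightarrow> bool" where
  "pos_coneable K S \<longleftrightarrow> (\<exists>B. B \<subseteq> S \<and> lin_indep B \<and> ordIso2 (card_of B) (card_of K) \<and>
     (\<forall>A c. finite A \<and> A \<noteq> {} \<and> A \<subseteq> B \<and> (\<forall>b\<in>A. c b > (0::real))
        \<longrightarrow> (\<lambda>\<alpha> x. \<Sum>b\<in>A. c b * b \<alpha> x) \<in> S))"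

definition neg_coneable :: "'k set \<Rightarrow> ('i \<Rightarrow> real \<Rightarrow> real) set \<Rightarrow> bool" where
  "neg_coneable K S \<longleftrightarrow> (\<exists>B. B \<subseteq> S \<and> lin_indep B \<and> ordIso2 (card_of B) (card_of K) \<and>
     (\<forall>A c. finite A \<and> A \<noteq> {} \<and> A \<subseteq> B \<and> (\<forall>b\<in>A. c b < (0::real))
        \<longrightarrow> (\<lambda>\<alpha> x. \<Sum>b\<in>A. c b * b \<alpha> x) \<in> S))"

definition coneable :: "'k set \<Rightarrow> ('i \<Rightarrow> real \<Rightarrow> real) set \<Rightarrow> bool" where
  "coneable K S \<longleftrightarrow> pos_coneable K S \<and> neg_coneable K S"

end

theory Submission
  imports
    Defs
    "HOL-Algebra.Free_Abelian_Groups" (* eqpoll_Fpow and the cardinal arithmetic of HOL-Cardinals *)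
begin

text \<open>Using non(N) = c, enumerate [0,1] along the continuum-long index type and let \<open>E \<alpha>\<close> be
  the set of points enumerated before \<open>\<alpha>\<close>: it is null, yet every point lies in \<open>E \<alpha>\<close> for all
  large \<open>\<alpha>\<close>. The indicators of the full-measure sets \<open>D \<alpha> = [0,1] - E \<alpha>\<close> therefore converge
  to 0 everywhere but not in measure, and multiplying them by an unbounded scalar sequence
  destroys every integrable majorant. The cone generators are such scaled indicators with scalar
  \<open>u \<alpha> (1 + [L \<alpha> \<subseteq> S])\<close>, one for each set of reals \<open>S\<close>, where \<open>L\<close> enumerates all finite sets
  of reals and \<open>u \<alpha>\<close> grows with the size of \<open>L \<alpha>\<close>. The summand 1 keeps a combination with
  coefficients of one sign bounded away from 0, and the subset tests \<open>[G \<subseteq> S]\<close> for finite \<open>G\<close>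
  separate distinct sets \<open>S\<close>, which gives linear independence.\<close>

lemma subset_test_coeffs_eq_0:
  fixes d :: "'a set \<Rightarrow> real"
  assumes "finite \<S>"
    and "\<And>G. finite G \<Longrightarrow> (\<Sum>S\<in>\<S>. d S * of_bool (G \<subseteq> S)) = 0"
  shows "\<forall>S\<in>\<S>. d S = 0"
  using assms
proof (induction rule: finite_psubset_induct)
  case (psubset \<S>)
  show ?case
  proof (cases "\<S> = {}")
    case False
    then obtain S1 where S1: "S1 \<in> \<S>" and maximal: "\<forall>S\<in>\<S>. S1 \<subseteq> S \<longrightarrow> S1 = S"
      using finite_has_maximal[OF psubset.hyps] by blast
    have "\<forall>S\<in>\<S> - {S1}. \<exists>y. y \<in> S1 \<and> y \<notin> S"
      using maximal by blast
    then obtain w where w: "\<And>S. S \<in> \<S> - {S1} \<Longrightarrow> w S \<in> S1 \<and> w S \<notin> S"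
      by (metis (lifting))
    let ?G = "w ` (\<S> - {S1})"
    have "0 = (\<Sum>S\<in>\<S>. d S * of_bool (?G \<subseteq> S))"
      by (rule psubset.prems[symmetric]) (use psubset.hyps in simp)
    also have "\<dots> = d S1 + (\<Sum>S\<in>\<S> - {S1}. d S * of_bool (?G \<subseteq> S))"
      using w by (simp add: sum.remove[OF psubset.hyps S1] image_subset_iff)
    also have "(\<Sum>S\<in>\<S> - {S1}. d S * of_bool (?G \<subseteq> S)) = 0"
    proof (intro sum.neutral ballI)
      fix S assume "S \<in> \<S> - {S1}"
      then have "\<not> ?G \<subseteq> S" using w by blast
      then show "d S * of_bool (?G \<subseteq> S) = 0" by simp
    qed
    finally have d1: "d S1 = 0" by simp
    have "\<forall>S\<in>\<S> - {S1}. d S = 0"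
    proof (rule psubset.IH)
      show "\<S> - {S1} \<subset> \<S>" using S1 by blast
      fix G :: "'a set" assume "finite G"
      then have "(\<Sum>S\<in>\<S>. d S * of_bool (G \<subseteq> S)) = 0"
        by (rule psubset.prems)
      then show "(\<Sum>S\<in>\<S> - {S1}. d S * of_bool (G \<subseteq> S)) = 0"
        using d1 by (simp add: sum.remove[OF psubset.hyps S1])
    qed
    with d1 show ?thesis by blast
  qed simp
qed

lemma abs_sum_le_abs_sum_weighted:
  fixes c w :: "'a \<Rightarrow> real"
  assumes w: "\<And>a. a \<in> A \<Longrightarrow> 1 \<le> w a"
    and sign: "(\<forall>a\<in>A. 0 \<le> c a) \<or> (\<forall>a\<in>A. c a \<le> 0)"
  shows "\<bar>\<Sum>a\<in>A. c a\<bar> \<le> \<bar>\<Sum>a\<in>A. c a * w a\<bar>"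
  using sign
proof
  assume "\<forall>a\<in>A. 0 \<le> c a"
  then have "0 \<le> (\<Sum>a\<in>A. c a)" "(\<Sum>a\<in>A. c a) \<le> (\<Sum>a\<in>A. c a * w a)"
    using w by (auto intro!: sum_nonneg sum_mono simp: mult_le_cancel_left1)
  then show ?thesis by linarith
next
  assume "\<forall>a\<in>A. c a \<le> 0"
  then have "(\<Sum>a\<in>A. c a) \<le> 0" "(\<Sum>a\<in>A. c a * w a) \<le> (\<Sum>a\<in>A. c a)"
    using w by (auto intro!: sum_nonpos sum_mono simp: mult_le_cancel_left2)
  then show ?thesis by linarith
qed

lemma kconv_const_imp_eq:
  fixes c l :: "'b::t1_space"
  assumes no_maximum: "\<And>\<alpha>0::'i::linorder. \<exists>\<alpha>. \<alpha>0 < \<alpha>"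
    and "kconv (\<lambda>_::'i. c) l"
  shows "c = l"
proof (rule ccontr)
  assume "c \<noteq> l"
  then have "open (- {c}) \<and> l \<in> - {c}" by auto
  with assms(2) obtain \<alpha>0 :: 'i where "\<forall>\<alpha>. \<alpha>0 < \<alpha> \<longrightarrow> c \<in> - {c}"
    unfolding kconv_def by blast
  with no_maximum[of \<alpha>0] show False by blast
qed

lemma continuum_order_no_maximum:
  fixes \<alpha>0 :: "'i::wellorder"
  assumes "continuum_order TYPE('i)"
  shows "\<exists>\<alpha>. \<alpha>0 < \<alpha>"
proof (rule ccontr)
  have card: "ordIso2 (card_of (UNIV :: 'i set)) (card_of (UNIV :: real set))"
    and seg: "ordLess2 (card_of {j. j < \<alpha>0}) (card_of (UNIV :: real set))"
    using assms unfolding continuum_order_def by auto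
  have "infinite (UNIV :: 'i set)"
    using card_of_ordIso_finite[OF card] infinite_UNIV_char_0 by auto
  moreover assume "\<not> (\<exists>\<alpha>. \<alpha>0 < \<alpha>)"
  then have "{j. j < \<alpha>0} = UNIV - {\<alpha>0}" using not_less_iff_gr_or_eq by auto
  ultimately have "ordIso2 (card_of {j. j < \<alpha>0}) (card_of (UNIV :: real set))"
    using card_of_infinite_diff_finite[of UNIV "{\<alpha>0}"] card by (auto intro: ordIso_transitive)
  then have "ordLess2 (card_of (UNIV :: real set)) (card_of (UNIV :: real set))"
    using seg ordIso_ordLess_trans ordIso_symmetric by blast
  then show False by (rule ordLess_irreflexive[THEN notE])
qed

lemma continuum_order_enumerates_finite_sets:
  assumes "continuum_order TYPE('i)"
  obtains L :: "'i::wellorder \<Rightarrow> real set" where "range L = Fpow UNIV"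
proof -
  have "(UNIV :: 'i set) \<approx> (UNIV :: real set)"
    using assms unfolding continuum_order_def eqpoll_iff_card_of_ordIso by auto
  also have "(UNIV :: real set) \<approx> Fpow (UNIV :: real set)"
    by (rule eqpoll_sym, rule eqpoll_Fpow) (simp add: infinite_UNIV_char_0)
  finally obtain L :: "'i \<Rightarrow> real set" where "bij_betw L UNIV (Fpow UNIV)"
    unfolding eqpoll_def by blast
  then show thesis
    using that unfolding bij_betw_def by blast
qed

lemma continuum_order_null_exhaustion:
  assumes "continuum_order TYPE('i)" and "nonN_eq_c"
  obtains E :: "'i::wellorder \<Rightarrow> real set"
  where "\<And>\<alpha>. E \<alpha> \<in> null_sets lebesgue"
    and "\<And>x. x \<in> {0..1} \<Longrightarrow> \<exists>\<beta>. \<forall>\<alpha>>\<beta>. x \<in> E \<alpha>"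
proof -
  have "ordIso2 (card_of (UNIV :: 'i set)) (card_of (UNIV :: real set))"
    and seg: "\<And>\<alpha>::'i. ordLess2 (card_of {j. j < \<alpha>}) (card_of (UNIV :: real set))"
    using assms(1) unfolding continuum_order_def by auto
  then obtain b :: "'i \<Rightarrow> real" where b: "bij b" using card_of_ordIso by blast
  show thesis
  proof
    fix \<alpha> :: 'i
    have "ordLeq2 (card_of (b ` {j. j < \<alpha>} \<inter> {0..1})) (card_of {j. j < \<alpha>})"
      using card_of_mono1[of "b ` {j. j < \<alpha>} \<inter> {0..1}" "b ` {j. j < \<alpha>}"] card_of_image
      by (blast intro: ordLeq_transitive)
    then show "b ` {j. j < \<alpha>} \<inter> {0..1} \<in> null_sets lebesgue"
      using assms(2) seg[of \<alpha>] unfolding nonN_eq_c_def by (blast intro: ordLeq_ordLess_trans)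
  next
    fix x :: real assume "x \<in> {0..1}"
    moreover obtain \<beta> where "b \<beta> = x" using b by (metis bij_pointE)
    ultimately show "\<exists>\<beta>. \<forall>\<alpha>>\<beta>. x \<in> b ` {j. j < \<alpha>} \<inter> {0..1}" by blast
  qed
qed

locale null_exhaustion =
  fixes E :: "'i::linorder \<Rightarrow> real set"
  assumes null_sets_E: "\<And>\<alpha>. E \<alpha> \<in> null_sets lebesgue"
    and eventually_in_E: "\<And>x. x \<in> {0..1} \<Longrightarrow> \<exists>\<beta>. \<forall>\<alpha>>\<beta>. x \<in> E \<alpha>"
    and no_maximum: "\<And>\<alpha>0::'i. \<exists>\<alpha>. \<alpha>0 < \<alpha>"
begin

definition D :: "'i \<Rightarrow> real set" where
  "D \<alpha> = {0..1} - E \<alpha>"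

lemma sets_D: "D \<alpha> \<in> sets LU"
proof -
  have "D \<alpha> \<in> sets lebesgue"
    unfolding D_def using null_sets_E[of \<alpha>] by (intro sets.Diff) (auto dest: null_setsD2)
  then show ?thesis by (simp add: sets_restrict_space_iff D_def)
qed

lemma measure_D: "measure LU (D \<alpha>) = 1"
proof -
  have "measure LU (D \<alpha>) = measure lebesgue (D \<alpha>)"
    by (rule measure_restrict_space) (auto simp: D_def)
  also have "\<dots> = measure lebesgue {0..1::real}"
    unfolding D_def by (rule measure_Diff_null_set) (auto simp: null_sets_E)
  finally show ?thesis by simp
qed

lemma has_bochner_integral_indicator_D:
  "has_bochner_integral LU (indicator (D \<alpha>) :: real \<Rightarrow> real) 1"
proof -
  interpret finite_measure LU
    by (rule finite_measure_lebesgue_on) (metis cbox_interval lmeasurable_cbox)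
  have "emeasure LU (D \<alpha>) < \<infinity>"
    using emeasure_finite by (simp add: less_top[symmetric])
  then show ?thesis
    using has_bochner_integral_real_indicator[OF sets_D] measure_D by simp
qed

lemma D_nonempty: "\<exists>x. x \<in> D \<alpha>"
  using measure_D[of \<alpha>] by (metis equals0I measure_empty zero_neq_one)

lemma kconv_scaled_indicator_D:
  fixes \<psi> :: "'i \<Rightarrow> real"
  shows "kconv (\<lambda>\<alpha>. \<psi> \<alpha> * indicator (D \<alpha>) x) 0"
  unfolding kconv_def
proof (intro allI impI)
  fix U :: "real set" assume "open U \<and> 0 \<in> U"
  moreover obtain \<beta> where "\<forall>\<alpha>>\<beta>. x \<notin> D \<alpha>"
    using eventually_in_E[of x] by (cases "x \<in> {0..1}") (auto simp: D_def)
  ultimately show "\<exists>\<alpha>0. \<forall>\<alpha>>\<alpha>0. \<psi> \<alpha> * indicator (D \<alpha>) x \<in> U"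
    by (intro exI[of _ \<beta>]) auto
qed

lemma scaled_indicator_D_in_ANM:
  fixes \<psi> :: "'i \<Rightarrow> real"
  assumes "\<epsilon> > 0" and "\<And>\<alpha>. \<epsilon> \<le> \<bar>\<psi> \<alpha>\<bar>"
  shows "(\<lambda>\<alpha> x. \<psi> \<alpha> * indicator (D \<alpha>) x) \<in> ANM"
proof -
  have "{x \<in> {0..1}. \<epsilon> \<le> \<bar>\<psi> \<alpha> * indicator (D \<alpha>) x - 0\<bar>} = D \<alpha>" for \<alpha>
    using assms by (auto simp: D_def indicator_def)
  moreover have "\<not> kconv (\<lambda>_::'i. 1::real) 0"
    using kconv_const_imp_eq[OF no_maximum, of "1::real" 0] by auto
  ultimately have "\<not> kconv (\<lambda>\<alpha>. measure LU {x \<in> {0..1}. \<epsilon> \<le> \<bar>\<psi> \<alpha> * indicator (D \<alpha>) x - 0\<bar>}) 0"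
    by (simp add: measure_D)
  moreover have "on_unit (\<lambda>x. \<psi> \<alpha> * indicator (D \<alpha>) x)" for \<alpha>
    by (auto simp: on_unit_def D_def)
  moreover have "(\<lambda>x. \<psi> \<alpha> * indicator (D \<alpha>) x) \<in> borel_measurable LU" for \<alpha>
    using sets_D by measurable
  ultimately show ?thesis
    unfolding ANM_def using assms(1) kconv_scaled_indicator_D
    by (auto intro!: bexI[of _ "\<lambda>_. 0"])
qed

lemma scaled_indicator_D_notin_ND:
  fixes \<psi> :: "'i \<Rightarrow> real"
  assumes unbounded: "\<And>M. \<exists>\<alpha>. M \<le> \<bar>\<psi> \<alpha>\<bar>"
  shows "(\<lambda>\<alpha> x. \<psi> \<alpha> * indicator (D \<alpha>) x) \<notin> ND"
proof
  assume "(\<lambda>\<alpha> x. \<psi> \<alpha> * indicator (D \<alpha>) x) \<in> ND"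
  then obtain g where g: "integrable LU g"
    and majorant: "\<And>\<alpha>. AE x in LU. \<bar>\<psi> \<alpha> * indicator (D \<alpha>) x\<bar> \<le> g x"
    unfolding ND_def by blast
  obtain \<alpha> where big: "integral\<^sup>L LU g + 1 \<le> \<bar>\<psi> \<alpha>\<bar>"
    using unbounded by blast
  have "has_bochner_integral LU (\<lambda>x. \<bar>\<psi> \<alpha>\<bar> * indicator (D \<alpha>) x) \<bar>\<psi> \<alpha>\<bar>"
    using has_bochner_integral_mult_right[OF has_bochner_integral_indicator_D[of \<alpha>], of "\<bar>\<psi> \<alpha>\<bar>"] by simp
  then have integrable: "integrable LU (\<lambda>x. \<bar>\<psi> \<alpha>\<bar> * indicator (D \<alpha>) x)"
    and integral: "integral\<^sup>L LU (\<lambda>x. \<bar>\<psi> \<alpha>\<bar> * indicator (D \<alpha>) x) = \<bar>\<psi> \<alpha>\<bar>"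
    unfolding has_bochner_integral_iff by blast+
  have "AE x in LU. \<bar>\<psi> \<alpha>\<bar> * indicator (D \<alpha>) x \<le> g x"
    using majorant[of \<alpha>] by eventually_elim (simp add: abs_mult)
  then have "integral\<^sup>L LU (\<lambda>x. \<bar>\<psi> \<alpha>\<bar> * indicator (D \<alpha>) x) \<le> integral\<^sup>L LU g"
    by (rule integral_mono_AE[OF integrable g])
  with big integral show False by linarith
qed

end

locale finite_set_enumeration = null_exhaustion E for E :: "'i::linorder \<Rightarrow> real set" +
  fixes L :: "'i \<Rightarrow> real set"
  assumes range_L: "range L = Fpow UNIV"
begin

definition scale :: "'i \<Rightarrow> real" where
  "scale \<alpha> = 1 + real (card (L \<alpha>))"

definition generator :: "real set \<Rightarrow> 'i \<Rightarrow> real \<Rightarrow> real" where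
  "generator S \<alpha> x = scale \<alpha> * (1 + of_bool (L \<alpha> \<subseteq> S)) * indicator (D \<alpha>) x"

lemma L_onto_finite: "finite G \<Longrightarrow> \<exists>\<alpha>. L \<alpha> = G"
  using range_L by (metis (mono_tags) Fpow_def UNIV_I mem_Collect_eq rangeE subsetI)

lemma scale_ge_1: "1 \<le> scale \<alpha>"
  by (simp add: scale_def)

lemma scale_unbounded: "\<exists>\<alpha>. M \<le> scale \<alpha>"
proof -
  obtain n :: nat where "M \<le> real n" using real_arch_simple by blast
  moreover obtain \<alpha> where "L \<alpha> = real ` {..<n}" using L_onto_finite[of "real ` {..<n}"] by blast
  moreover have "card (real ` {..<n}) = n" by (simp add: card_image)
  ultimately have "M \<le> scale \<alpha>" by (simp add: scale_def)
  then show ?thesis ..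
qed

lemma sum_generator:
  "(\<Sum>S\<in>\<S>. c S * generator S \<alpha> x) =
     scale \<alpha> * (\<Sum>S\<in>\<S>. c S * (1 + of_bool (L \<alpha> \<subseteq> S))) * indicator (D \<alpha>) x"
  by (simp add: generator_def sum_distrib_left sum_distrib_right algebra_simps)

lemma sum_generator_in_ANM_minus_ND:
  assumes "finite \<S>" "\<S> \<noteq> {}" and sign: "(\<forall>S\<in>\<S>. 0 < c S) \<or> (\<forall>S\<in>\<S>. c S < 0)"
  shows "(\<lambda>\<alpha> x. \<Sum>S\<in>\<S>. c S * generator S \<alpha> x) \<in> ANM - ND"
proof -
  define \<psi> where "\<psi> \<alpha> = scale \<alpha> * (\<Sum>S\<in>\<S>. c S * (1 + of_bool (L \<alpha> \<subseteq> S)))" for \<alpha>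
  define \<epsilon> where "\<epsilon> = \<bar>\<Sum>S\<in>\<S>. c S\<bar>"
  have "(\<Sum>S\<in>\<S>. c S) \<noteq> 0"
    using sign
  proof
    assume "\<forall>S\<in>\<S>. 0 < c S"
    then have "0 < (\<Sum>S\<in>\<S>. c S)" using assms(1,2) by (intro sum_pos) auto
    then show ?thesis by simp
  next
    assume "\<forall>S\<in>\<S>. c S < 0"
    then have "0 < (\<Sum>S\<in>\<S>. - c S)" using assms(1,2) by (intro sum_pos) auto
    then show ?thesis by (simp add: sum_negf)
  qed
  then have \<epsilon>: "\<epsilon> > 0" by (simp add: \<epsilon>_def)
  have bound: "\<epsilon> * scale \<alpha> \<le> \<bar>\<psi> \<alpha>\<bar>" for \<alpha>
  proof -
    have "\<epsilon> \<le> \<bar>\<Sum>S\<in>\<S>. c S * (1 + of_bool (L \<alpha> \<subseteq> S))\<bar>"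
      unfolding \<epsilon>_def using sign
      by (intro abs_sum_le_abs_sum_weighted) (auto simp: less_imp_le)
    then show ?thesis
      using scale_ge_1[of \<alpha>] by (simp add: \<psi>_def abs_mult mult.commute)
  qed
  have "\<epsilon> \<le> \<bar>\<psi> \<alpha>\<bar>" for \<alpha>
  proof -
    have "\<epsilon> \<le> \<epsilon> * scale \<alpha>" using \<epsilon> scale_ge_1[of \<alpha>] by simp
    with bound[of \<alpha>] show ?thesis by linarith
  qed
  then have "(\<lambda>\<alpha> x. \<psi> \<alpha> * indicator (D \<alpha>) x) \<in> ANM"
    by (rule scaled_indicator_D_in_ANM[OF \<epsilon>])
  moreover have "\<exists>\<alpha>. M \<le> \<bar>\<psi> \<alpha>\<bar>" for M
  proof -
    obtain \<alpha> where "M / \<epsilon> \<le> scale \<alpha>" using scale_unbounded by blast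
    then have "M \<le> \<epsilon> * scale \<alpha>" using \<epsilon> by (simp add: field_simps)
    with bound[of \<alpha>] have "M \<le> \<bar>\<psi> \<alpha>\<bar>" by linarith
    then show ?thesis ..
  qed
  then have "(\<lambda>\<alpha> x. \<psi> \<alpha> * indicator (D \<alpha>) x) \<notin> ND"
    by (rule scaled_indicator_D_notin_ND)
  ultimately show ?thesis
    by (simp add: sum_generator \<psi>_def)
qed

lemma inj_generator: "inj generator"
proof (rule injI)
  fix S T :: "real set" assume eq: "generator S = generator T"
  have "y \<in> S \<longleftrightarrow> y \<in> T" for y
  proof -
    obtain \<alpha> where \<alpha>: "L \<alpha> = {y}" using L_onto_finite[of "{y}"] by blast
    obtain x where "x \<in> D \<alpha>" using D_nonempty by blast
    then have "scale \<alpha> * (1 + of_bool (y \<in> S)) = scale \<alpha> * (1 + of_bool (y \<in> T))"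
      using fun_cong[OF fun_cong[OF eq, of \<alpha>], of x] \<alpha> by (simp add: generator_def)
    then show "y \<in> S \<longleftrightarrow> y \<in> T"
      using scale_ge_1[of \<alpha>] by auto
  qed
  then show "S = T" by blast
qed

lemma sum_generator_eq_0_imp_coeffs_eq_0:
  assumes "finite \<S>" and zero: "\<And>\<alpha> x. (\<Sum>S\<in>\<S>. d S * generator S \<alpha> x) = 0"
  shows "\<forall>S\<in>\<S>. d S = 0"
proof -
  have weighted: "(\<Sum>S\<in>\<S>. d S * (1 + of_bool (G \<subseteq> S))) = 0" if G: "finite G" for G
  proof -
    obtain \<alpha> where \<alpha>: "L \<alpha> = G" using L_onto_finite[OF G] by blast
    obtain x where "x \<in> D \<alpha>" using D_nonempty by blast
    then show ?thesis
      using zero[of \<alpha> x] scale_ge_1[of \<alpha>] \<alpha> by (simp add: sum_generator)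
  qed
  have "(\<Sum>S\<in>\<S>. d S) = 0"
    using weighted[of "{}"] by (simp add: sum_distrib_right[symmetric])
  then have "(\<Sum>S\<in>\<S>. d S * of_bool (G \<subseteq> S)) = 0" if "finite G" for G
    using weighted[OF that] by (simp add: distrib_left sum.distrib)
  with assms(1) show ?thesis
    by (rule subset_test_coeffs_eq_0)
qed

lemma finite_subset_range_generator:
  assumes "finite A" "A \<subseteq> range generator"
  shows "\<exists>\<S>. finite \<S> \<and> A = generator ` \<S> \<and>
    (\<forall>c \<alpha> x. (\<Sum>b\<in>A. c b * b \<alpha> x) = (\<Sum>S\<in>\<S>. c (generator S) * generator S \<alpha> x))"
proof -
  obtain \<S> where A: "A = generator ` \<S>"
    using assms(2) unfolding subset_image_iff by blast
  have inj: "inj_on generator \<S>"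
    using inj_generator by (rule inj_on_subset) simp
  have "finite \<S>"
    using assms(1) unfolding A finite_image_iff[OF inj] .
  moreover have "(\<Sum>b\<in>A. c b * b \<alpha> x) = (\<Sum>S\<in>\<S>. c (generator S) * generator S \<alpha> x)" for c \<alpha> x
    by (rule sum.reindex_cong[OF inj A]) simp
  ultimately show ?thesis using A by blast
qed

lemma coneable_ANM_minus_ND: "coneable (Pow (UNIV :: real set)) (ANM - ND :: ('i \<Rightarrow> real \<Rightarrow> real) set)"
proof -
  have cone: "(\<lambda>\<alpha> x. \<Sum>b\<in>A. c b * b \<alpha> x) \<in> ANM - ND"
    if A_fin: "finite A" and A_ne: "A \<noteq> {}" and A_sub: "A \<subseteq> range generator"
      and sign: "(\<forall>b\<in>A. 0 < c b) \<or> (\<forall>b\<in>A. c b < 0)" for A c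
  proof -
    obtain \<S> where "finite \<S>" and A: "A = generator ` \<S>"
      and sum: "\<And>c \<alpha> x. (\<Sum>b\<in>A. c b * b \<alpha> x) = (\<Sum>S\<in>\<S>. c (generator S) * generator S \<alpha> x)"
      using finite_subset_range_generator[OF A_fin A_sub] by blast
    have "(\<lambda>\<alpha> x. \<Sum>S\<in>\<S>. c (generator S) * generator S \<alpha> x) \<in> ANM - ND"
    proof (rule sum_generator_in_ANM_minus_ND)
      show "finite \<S>" by fact
      show "\<S> \<noteq> {}" using A_ne A by blast
      show "(\<forall>S\<in>\<S>. 0 < c (generator S)) \<or> (\<forall>S\<in>\<S>. c (generator S) < 0)"
        using sign A by blast
    qed
    then show ?thesis by (simp only: sum)
  qed
  have "range generator \<subseteq> ANM - ND"
  proof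
    fix b assume "b \<in> range generator"
    with cone[of "{b}" "\<lambda>_. 1"] show "b \<in> ANM - ND" by simp
  qed
  moreover have "lin_indep (range generator)"
    unfolding lin_indep_def
  proof (intro allI impI)
    fix A c assume A: "finite A \<and> A \<subseteq> range generator \<and> (\<forall>\<alpha> x. (\<Sum>b\<in>A. c b * b \<alpha> x) = 0)"
    then obtain \<S> where "finite \<S>" and A_eq: "A = generator ` \<S>"
      and sum: "\<And>c \<alpha> x. (\<Sum>b\<in>A. c b * b \<alpha> x) = (\<Sum>S\<in>\<S>. c (generator S) * generator S \<alpha> x)"
      using finite_subset_range_generator[of A] by blast
    have "\<forall>S\<in>\<S>. c (generator S) = 0"
      using \<open>finite \<S>\<close> by (rule sum_generator_eq_0_imp_coeffs_eq_0) (use A in \<open>simp add: sum\<close>)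
    then show "\<forall>b\<in>A. c b = 0" using A_eq by blast
  qed
  moreover have "ordIso2 (card_of (range generator)) (card_of (Pow (UNIV :: real set)))"
  proof -
    have "bij_betw generator UNIV (range generator)"
      using inj_generator by (simp add: bij_betw_def)
    then have "ordIso2 (card_of (UNIV :: real set set)) (card_of (range generator))"
      using card_of_ordIso by blast
    then show ?thesis unfolding Pow_UNIV by (rule ordIso_symmetric)
  qed
  ultimately show ?thesis
    unfolding coneable_def pos_coneable_def neg_coneable_def
    by (intro conjI exI[of _ "range generator"] allI impI) (use cone in blast)+
qed

end

theorem mainTheorem9:
  assumes "continuum_order TYPE('i::wellorder)"
    and "nonN_eq_c"
  shows "coneable (Pow (UNIV :: real set)) (ANM - ND :: ('i \<Rightarrow> real \<Rightarrow> real) set)"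
proof -
  obtain E :: "'i \<Rightarrow> real set"
    where null: "\<And>\<alpha>. E \<alpha> \<in> null_sets lebesgue"
      and exhaust: "\<And>x. x \<in> {0..1} \<Longrightarrow> \<exists>\<beta>. \<forall>\<alpha>>\<beta>. x \<in> E \<alpha>"
    using continuum_order_null_exhaustion[OF assms] by blast
  obtain L :: "'i \<Rightarrow> real set" where L: "range L = Fpow UNIV"
    using continuum_order_enumerates_finite_sets[OF assms(1)] by blast
  have no_maximum: "\<And>\<alpha>0::'i. \<exists>\<alpha>. \<alpha>0 < \<alpha>"
    using continuum_order_no_maximum[OF assms(1)] by blast
  interpret finite_set_enumeration E L
  proof
    show "E \<alpha> \<in> null_sets lebesgue" for \<alpha> by (fact null)
    show "\<exists>\<beta>. \<forall>\<alpha>>\<beta>. x \<in> E \<alpha>" if "x \<in> {0..1}" for x using that by (fact exhaust)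
    show "\<exists>\<alpha>. \<alpha>0 < \<alpha>" for \<alpha>0 :: 'i by (fact no_maximum)
    show "range L = Fpow UNIV" by (fact L)
  qed
  show ?thesis by (rule coneable_ANM_minus_ND)
qed

end
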